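(* Let $f,g\in F$ with $g\neq f$ be mutually singular with respect to each other, and let $\vec f=(f,g)$. If $T$ is a reasonable test, then $f(A^{\vec f}_{T,f})=g(A^{\vec f}_{T,g})=1$.
   Context: Let $\Omega=\{0,1\}$, $\Omega^\infty$ the set of infinite sequences $\omega=(\omega_1,\omega_2,\dots)$, and $\omega^t=(\omega_1,\dots,\omega_t)$ (also used for the cylinder set of all sequences with this prefix; $\omega^0=\emptyset$). $\mathcal G_t$ is the $\sigma$-algebra generated by the length-$t$ cylinders and $\mathcal G_\infty$ the $\sigma$-algebra generated by all cylinders. $\Delta(\Omega)$ is the set of probability distributions on $\Omega$; for $p\in\Delta(\Omega)$ and $x\in\Omega$, $p[x]$ is the probability of $x$. A forecasting strategy is a map $f:\bigcup_{t\ge0}(\Omega\times\Delta(\Omega)\times\Delta(\Omega))^t\to\Delta(\Omega)$; $F$ is the set of all forecasting strategies. Given an ordered pair $\vec f=(f,g)\in F\times F$ and $\omega\in\Omega^\infty$, the play path $(\omega,\vec f)\in(\Omega\times\Delta(\Omega)\times\Delta(\Omega))^\infty$ is defined recursively: $(\omega,\vec f)^0=\emptyset$ and its $t$-th entry is $(\omega_t,f((\omega,\vec f)^{t-1}),g((\omega,\vec f)^{t-1}))$. The pair $\vec f$ induces two probability measures on $(\Omega^\infty,\mathcal G_\infty)$, again denoted $f$ and $g$, determined by $f(\omega^t)=\prod_{n=1}^t f((\omega,\vec f)^{n-1})[\omega_n]$ and $g(\omega^t)=\prod_{n=1}^t g((\omega,\vec f)^{n-1})[\omega_n]$. A (cardinal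 comparison) test is a sequence $T=(T_t)_{t>0}$ of $\mathcal G_t$-measurable functions $T_t:(\Omega\times\Delta(\Omega)\times\Delta(\Omega))^\infty\to[0,1]$; write $T_t(\omega,\vec f)=T_t((\omega,\vec f))$ and $T(\omega,\vec f)=\lim_t T_t(\omega,\vec f)$ whenever the limit exists. For $\epsilon\in(0,1)$ let $L^{\vec f}_{T,\epsilon}=\{\omega:T(\omega,\vec f)\text{ exists and }>\epsilon\}$ and $R^{\vec f}_{T,\epsilon}=\{\omega:T(\omega,\vec f)\text{ exists and }<\epsilon\}$. $T$ is reasonable if for all $\vec f=(f,g)$ and measurable $A$: for $\epsilon\in(0,\frac12)$, if $g(A)>0$ and $f(A)<\frac{\epsilon}{1-\epsilon}g(A)$ then $g(A\cap R^{\vec f}_{T,\epsilon})>0$; and for $\epsilon\in(\frac12,1)$, if $f(A)>0$ and $g(A)<\frac{1-\epsilon}{\epsilon}f(A)$ then $f(A\cap L^{\vec f}_{T,\epsilon})>0$. Let $A^{\vec f}_{T,f}=\{\omega: T_t(\omega,\vec f)\to1\}$ and $A^{\vec f}_{T,g}=\{\omega: T_t(\omega,\vec f)\to0\}$. Two forecasting strategies $f\ne g$ are mutually singular with respect to each other if there exist disjoint sets $C_f,C_g\subseteq(\Omega\times\Delta(\Omega)\times\Delta(\Omega))^\infty$ with $f(\{\omega:(\omega,\vec f)\in C_f\})=g(\{\omega:(\omega,\vec f)\in C_g\})=1$, where $\vec f=(f,g)$ and $f,g$ on the left denote the induced measures. *)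

theory Defs
  imports "HOL-Probability.Probability"
begin

text \<open>Outcomes: Omega = {0,1} rendered as bool. Delta(Omega) = bool pmf, p[x] = pmf p x.
  Infinite sequences omega = (omega_1, omega_2, ...) are functions nat => bool with
  omega_{n+1} = omega n (0-based indexing).\<close>

type_synonym entry = "bool \<times> bool pmf \<times> bool pmf"
type_synonym history = "entry list"
type_synonym forecaster = "history \<Rightarrow> bool pmf"
type_synonym playpath = "nat \<Rightarrow> entry"

fun hist :: "(nat \<Rightarrow> bool) \<Rightarrow> forecaster \<Rightarrow> forecaster \<Rightarrow> nat \<Rightarrow> history" where
  "hist \<omega> f g 0 = []"
| "hist \<omega> f g (Suc n) = hist \<omega> f g n @ [(\<omega> n, f (hist \<omega> f g n), g (hist \<omega> f g n))]"

text \<open>The play path (omega, vec f); entry number n (0-based) is the (n+1)-th entry.\<close>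
definition path :: "(nat \<Rightarrow> bool) \<Rightarrow> forecaster \<Rightarrow> forecaster \<Rightarrow> playpath" where
  "path \<omega> f g n = (\<omega> n, f (hist \<omega> f g n), g (hist \<omega> f g n))"

definition Omega_inf :: "(nat \<Rightarrow> bool) measure" where
  "Omega_inf = PiM UNIV (\<lambda>_. count_space UNIV)"

definition cyl :: "(nat \<Rightarrow> bool) \<Rightarrow> nat \<Rightarrow> (nat \<Rightarrow> bool) set" where
  "cyl \<omega> t = {\<omega>'. \<forall>i<t. \<omega>' i = \<omega> i}"

text \<open>The probability measure induced on (Omega^infinity, G_infinity) by the forecasts of
  \<open>sel\<close> (which is f or g) along the play path of the pair (f,g).\<close>
definition induced :: "forecaster \<Rightarrow> forecaster \<Rightarrow> forecaster \<Rightarrow> (nat \<Rightarrow> bool) measure" where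
  "induced sel f g = (SOME M. prob_space M \<and> sets M = sets Omega_inf \<and>
      (\<forall>\<omega> t. emeasure M (cyl \<omega> t) = ennreal (\<Prod>n<t. pmf (sel (hist \<omega> f g n)) (\<omega> n))))"

definition measF :: "forecaster \<Rightarrow> forecaster \<Rightarrow> (nat \<Rightarrow> bool) measure" where
  "measF f g = induced f f g"

definition measG :: "forecaster \<Rightarrow> forecaster \<Rightarrow> (nat \<Rightarrow> bool) measure" where
  "measG f g = induced g f g"

text \<open>A test: T t for t > 0 takes values in [0,1] and is G_t-measurable, i.e. depends only
  on the first t entries of the play path. (T 0 is irrelevant.)\<close>
definition is_test :: "(nat \<Rightarrow> playpath \<Rightarrow> real) \<Rightarrow> bool" where
  "is_test T \<longleftrightarrow> (\<forall>t>0. \<forall>x. 0 \<le> T t x \<and> T t x \<le> 1) \<and>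
     (\<forall>t>0. \<forall>x y. (\<forall>i<t. x i = y i) \<longrightarrow> T t x = T t y)"

definition Lset :: "(nat \<Rightarrow> playpath \<Rightarrow> real) \<Rightarrow> forecaster \<Rightarrow> forecaster \<Rightarrow> real \<Rightarrow> (nat \<Rightarrow> bool) set" where
  "Lset T f g \<epsilon> = {\<omega>. convergent (\<lambda>t. T t (path \<omega> f g)) \<and> lim (\<lambda>t. T t (path \<omega> f g)) > \<epsilon>}"

definition Rset :: "(nat \<Rightarrow> playpath \<Rightarrow> real) \<Rightarrow> forecaster \<Rightarrow> forecaster \<Rightarrow> real \<Rightarrow> (nat \<Rightarrow> bool) set" where
  "Rset T f g \<epsilon> = {\<omega>. convergent (\<lambda>t. T t (path \<omega> f g)) \<and> lim (\<lambda>t. T t (path \<omega> f g)) < \<epsilon>}"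

definition reasonable :: "(nat \<Rightarrow> playpath \<Rightarrow> real) \<Rightarrow> bool" where
  "reasonable T \<longleftrightarrow> is_test T \<and>
    (\<forall>f g A. A \<in> sets Omega_inf \<longrightarrow>
      (\<forall>\<epsilon>. 0 < \<epsilon> \<and> \<epsilon> < 1/2 \<longrightarrow>
         measure (measG f g) A > 0 \<and> measure (measF f g) A < \<epsilon> / (1 - \<epsilon>) * measure (measG f g) A
         \<longrightarrow> measure (measG f g) (A \<inter> Rset T f g \<epsilon>) > 0) \<and>
      (\<forall>\<epsilon>. 1/2 < \<epsilon> \<and> \<epsilon> < 1 \<longrightarrow>
         measure (measF f g) A > 0 \<and> measure (measG f g) A < (1 - \<epsilon>) / \<epsilon> * measure (measF f g) A
         \<longrightarrow> measure (measF f g) (A \<inter> Lset T f g \<epsilon>) > 0))"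

definition AsetF :: "(nat \<Rightarrow> playpath \<Rightarrow> real) \<Rightarrow> forecaster \<Rightarrow> forecaster \<Rightarrow> (nat \<Rightarrow> bool) set" where
  "AsetF T f g = {\<omega>. (\<lambda>t. T t (path \<omega> f g)) \<longlonglongrightarrow> 1}"

definition AsetG :: "(nat \<Rightarrow> playpath \<Rightarrow> real) \<Rightarrow> forecaster \<Rightarrow> forecaster \<Rightarrow> (nat \<Rightarrow> bool) set" where
  "AsetG T f g = {\<omega>. (\<lambda>t. T t (path \<omega> f g)) \<longlonglongrightarrow> 0}"

definition mutually_singular :: "forecaster \<Rightarrow> forecaster \<Rightarrow> bool" where
  "mutually_singular f g \<longleftrightarrow> f \<noteq> g \<and>
    (\<exists>Cf Cg :: playpath set. Cf \<inter> Cg = {} \<and>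
       measure (measF f g) {\<omega>. path \<omega> f g \<in> Cf} = 1 \<and>
       measure (measG f g) {\<omega>. path \<omega> f g \<in> Cg} = 1)"

end

theory Submission
  imports Defs
begin

text \<open>Mutual singularity gives disjoint sets \<open>C\<^sub>f\<close>, \<open>C\<^sub>g\<close> with \<open>f(C\<^sub>f) = g(C\<^sub>g) = 1\<close>, so every
  subset \<open>A\<close> of \<open>C\<^sub>f\<close> is \<open>g\<close>-null. For \<open>\<epsilon> \<in> (1/2,1)\<close> apply reasonableness to
  \<open>A = C\<^sub>f - L\<^sub>\<epsilon>\<close>: if \<open>f(A) > 0\<close> then \<open>g(A) = 0 < (1-\<epsilon>)/\<epsilon> f(A)\<close>, so \<open>A\<close> would meet \<open>L\<^sub>\<epsilon>\<close>.
  Hence \<open>f\<close>-almost surely \<open>lim T > \<epsilon>\<close>, and letting \<open>\<epsilon> \<rightarrow> 1\<close> along a sequence, \<open>T \<rightarrow> 1\<close>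
  \<open>f\<close>-almost surely. The argument for \<open>g\<close> is symmetric, using the sets \<open>R\<^sub>\<epsilon>\<close>.\<close>

lemma sets_PiM_finite_count_space:
  assumes "finite J"
  shows "sets (PiM J (\<lambda>_. count_space (UNIV :: 'a :: countable set)))
    = Pow (space (PiM J (\<lambda>_. count_space UNIV)))" (is "sets ?M = _")
proof (intro antisym subsetI)
  fix A assume "A \<in> Pow (space ?M)"
  hence A: "A \<subseteq> space ?M" by auto
  have "countable (space ?M)"
    using assms by (simp add: space_PiM countable_PiE)
  hence "countable A" using A countable_subset by blast
  moreover have "{x} \<in> sets ?M" if "x \<in> A" for x
  proof -
    have "x \<in> extensional J" using A that by (auto simp: space_PiM PiE_iff)
    hence "{x} = PiE J (\<lambda>i. {x i})" by (auto simp: PiE_iff extensional_def fun_eq_iff) metis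
    thus ?thesis using assms by (auto intro!: sets_PiM_I_countable countable_finite)
  qed
  ultimately have "(\<Union>x\<in>A. {x}) \<in> sets ?M" by (intro sets.countable_UN'') auto
  thus "A \<in> sets ?M" by simp
qed (use sets.sets_into_space in auto)

lemma measurable_from_finite_PiM_count_space:
  assumes "finite J"
    and "\<And>x. x \<in> space (PiM J (\<lambda>_. count_space (UNIV :: 'a :: countable set))) \<Longrightarrow> h x \<in> space N"
  shows "h \<in> measurable (PiM J (\<lambda>_. count_space UNIV)) N"
proof -
  let ?M = "PiM J (\<lambda>_. count_space (UNIV :: 'a set))"
  have "h \<in> measurable (count_space (space ?M)) N"
    using assms(2) by (auto simp: measurable_def)
  moreover have "sets ?M = sets (count_space (space ?M))"
    using sets_PiM_finite_count_space[OF assms(1)] by simp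
  ultimately show ?thesis using measurable_cong_sets[OF _ refl] by blast
qed

abbreviation outcomes :: "nat \<Rightarrow> bool measure" where
  "outcomes \<equiv> \<lambda>_. count_space UNIV"

lemma space_Omega_inf [simp]: "space Omega_inf = UNIV"
  by (simp add: Omega_inf_def space_PiM)

lemma hist_cong: "(\<And>i. i < n \<Longrightarrow> x i = y i) \<Longrightarrow> hist x f g n = hist y f g n"
  by (induction n) auto

lemma path_cong: "(\<And>i. i < t \<Longrightarrow> x i = y i) \<Longrightarrow> i < t \<Longrightarrow> path x f g i = path y f g i"
  using hist_cong[of i x y f g] by (simp add: path_def)

text \<open>The induced measures exist as Ionescu-Tulcea extensions of these kernels.\<close>
definition forecast_kernel :: "forecaster \<Rightarrow> forecaster \<Rightarrow> forecaster \<Rightarrow> nat \<Rightarrow> (nat \<Rightarrow> bool) \<Rightarrow> bool measure"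
  where "forecast_kernel sel f g n \<omega> = measure_pmf (sel (hist \<omega> f g n))"

context
  fixes sel f g :: forecaster
begin

interpretation IT: Ionescu_Tulcea "forecast_kernel sel f g" outcomes
  by (rule Ionescu_Tulcea.intro)
    (auto intro!: measurable_from_finite_PiM_count_space
      simp: forecast_kernel_def space_subprob_algebra prob_space_imp_subprob_space prob_space_measure_pmf)

lemma prod_forecast_restrict:
  "(\<Prod>n<t. pmf (sel (hist (restrict \<omega> {0..<t}) f g n)) (restrict \<omega> {0..<t} n))
    = (\<Prod>n<t. pmf (sel (hist \<omega> f g n)) (\<omega> n))"
  by (intro prod.cong refl) (auto intro!: arg_cong2[where f=pmf] arg_cong[where f=sel] hist_cong)

lemma emeasure_forecast_eP_singleton:
  assumes y: "y \<in> space (PiM {0..<t} outcomes)" and v: "v \<in> space (PiM {0..<Suc t} outcomes)"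
  shows "emeasure (IT.eP t y) {v} = ennreal (pmf (sel (hist v f g t)) (v t)) * indicator {restrict v {0..<t}} y"
proof -
  have "{v} \<in> sets (PiM {0..<Suc t} outcomes)"
    using v sets_PiM_finite_count_space[of "{0..<Suc t}"] by auto
  hence "emeasure (IT.eP t y) {v} = forecast_kernel sel f g t y ((\<lambda>x. y(t := x)) -` {v})"
    using IT.emeasure_eP[OF y] by simp
  also have "\<dots> = ennreal (pmf (sel (hist v f g t)) (v t)) * indicator {restrict v {0..<t}} y"
  proof (cases "y = restrict v {0..<t}")
    case True
    hence "(\<lambda>x. y(t := x)) -` {v} = {v t}"
      using v by (auto simp: space_PiM PiE_iff extensional_def fun_eq_iff)
    moreover have "hist y f g t = hist v f g t" using True by (intro hist_cong) auto
    ultimately show ?thesis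
      using True by (simp add: forecast_kernel_def emeasure_pmf_single)
  next
    case False
    then obtain j where j: "y j \<noteq> restrict v {0..<t} j" by blast
    have "j < t" using j y by (cases "j < t") (auto simp: space_PiM PiE_iff extensional_def)
    hence "(\<lambda>x. y(t := x)) -` {v} = {}" using j by (auto simp: fun_eq_iff)
    thus ?thesis using False by simp
  qed
  finally show ?thesis .
qed

lemma emeasure_forecast_C_singleton:
  "v \<in> space (PiM {0..<t} outcomes) \<Longrightarrow>
    emeasure (IT.C 0 t (\<lambda>_. undefined)) {v} = ennreal (\<Prod>n<t. pmf (sel (hist v f g n)) (v n))"
proof (induction t arbitrary: v)
  case 0
  then have "v = (\<lambda>_. undefined)" by (auto simp: space_PiM PiE_iff extensional_def fun_eq_iff)
  moreover have "{v} \<in> sets (PiM {0..<0} outcomes)"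
    using 0 sets_PiM_finite_count_space[of "{}"] by auto
  ultimately show ?case by simp
next
  case (Suc t)
  let ?C = "IT.C 0 t (\<lambda>_. undefined)" and ?w = "restrict v {0..<t}"
  have u0: "(\<lambda>_. undefined) \<in> space (PiM {0..<0} outcomes)" by (simp add: space_PiM)
  have sets_C: "sets ?C = sets (PiM {0..<t} outcomes)"
    using IT.sets_C[OF u0, of t] by simp
  have w: "?w \<in> space (PiM {0..<t} outcomes)" by (auto simp: space_PiM)
  have "{v} \<in> sets (PiM {0..<Suc t} outcomes)"
    using Suc.prems sets_PiM_finite_count_space[of "{0..<Suc t}"] by auto
  hence "emeasure (IT.C 0 (Suc t) (\<lambda>_. undefined)) {v} = (\<integral>\<^sup>+y. emeasure (IT.eP t y) {v} \<partial>?C)"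
    by (simp, subst emeasure_bind[where N="PiM {0..<Suc t} outcomes"])
      (auto simp: IT.space_C space_PiM_empty_iff sets_C measurable_cong_sets[OF sets_C refl]
        IT.measurable_eP)
  also have "\<dots> = (\<integral>\<^sup>+y. ennreal (pmf (sel (hist v f g t)) (v t)) * indicator {?w} y \<partial>?C)"
    using Suc.prems IT.space_C[OF u0, of t]
    by (intro nn_integral_cong) (simp add: emeasure_forecast_eP_singleton)
  also have "\<dots> = ennreal (pmf (sel (hist v f g t)) (v t)) * emeasure ?C {?w}"
    using sets_PiM_finite_count_space[of "{0..<t}"] w sets_C
    by (intro nn_integral_cmult_indicator) auto
  also have "emeasure ?C {?w} = ennreal (\<Prod>n<t. pmf (sel (hist v f g n)) (v n))"
    using Suc.IH[OF w] by (simp only: prod_forecast_restrict)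
  finally show ?case by (simp add: ennreal_mult[symmetric] prod_nonneg mult.commute)
qed

lemma emeasure_forecast_lim_cyl:
  "emeasure IT.PF.lim (cyl \<omega> t) = ennreal (\<Prod>n<t. pmf (sel (hist \<omega> f g n)) (\<omega> n))"
proof -
  let ?v = "restrict \<omega> {0..<t}"
  have cyl_eq: "cyl \<omega> t = prod_emb UNIV outcomes {0..<t} {?v}"
    by (auto simp: cyl_def prod_emb_def fun_eq_iff space_PiM) metis+
  have v: "{?v} \<in> sets (PiM {0..<t} outcomes)"
    using sets_PiM_finite_count_space[of "{0..<t}"] by (auto simp: space_PiM)
  have "emeasure IT.PF.lim (cyl \<omega> t) = emeasure (IT.CI {0..<t}) {?v}"
    unfolding cyl_eq by (rule IT.lim[OF _ v]) simp
  also have "\<dots> = emeasure (IT.C 0 t (\<lambda>_. undefined)) {?v}"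
    using IT.emeasure_CI[OF subset_refl v] prod_emb_id[of "{?v}"] by (auto simp: space_PiM)
  also have "\<dots> = ennreal (\<Prod>n<t. pmf (sel (hist \<omega> f g n)) (\<omega> n))"
    by (subst emeasure_forecast_C_singleton) (auto simp: space_PiM simp del: restrict_apply, simp only: prod_forecast_restrict)
  finally show ?thesis .
qed

lemma induced_spec:
  "prob_space (induced sel f g) \<and> sets (induced sel f g) = sets Omega_inf \<and>
    (\<forall>\<omega> t. emeasure (induced sel f g) (cyl \<omega> t) = ennreal (\<Prod>n<t. pmf (sel (hist \<omega> f g n)) (\<omega> n)))"
  unfolding induced_def
proof (rule someI[of _ IT.PF.lim], intro conjI allI)
  have "space IT.PF.lim = cyl (\<lambda>_. undefined) 0" by (simp add: cyl_def space_PiM)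
  thus "prob_space IT.PF.lim"
    by (intro prob_spaceI) (simp add: emeasure_forecast_lim_cyl)
qed (simp_all add: Omega_inf_def emeasure_forecast_lim_cyl)

end

lemma measurable_test:
  assumes "is_test T" "0 < t"
  shows "(\<lambda>\<omega>. T t (path \<omega> f g)) \<in> borel_measurable Omega_inf"
proof -
  have "T t (path \<omega> f g) = T t (path (restrict \<omega> {0..<t}) f g)" for \<omega>
    using assms path_cong[of t \<omega> "restrict \<omega> {0..<t}" _ f g] unfolding is_test_def by simp
  moreover have "(\<lambda>x. T t (path x f g)) \<circ> (\<lambda>\<omega>. restrict \<omega> {0..<t}) \<in> borel_measurable Omega_inf"
    unfolding Omega_inf_def
    by (rule measurable_comp[OF measurable_restrict_subset measurable_from_finite_PiM_count_space]) auto
  ultimately show ?thesis by (simp add: comp_def)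
qed

lemma sets_Collect_convergent_lim:
  fixes X :: "nat \<Rightarrow> 'a \<Rightarrow> real"
  assumes "\<And>t. 0 < t \<Longrightarrow> X t \<in> borel_measurable M" and "S \<in> sets borel"
  shows "{\<omega> \<in> space M. convergent (\<lambda>t. X t \<omega>) \<and> lim (\<lambda>t. X t \<omega>) \<in> S} \<in> sets M"
proof -
  have [measurable]: "(\<lambda>\<omega>. X (Suc t) \<omega>) \<in> borel_measurable M" for t
    using assms(1) by simp
  have "{\<omega> \<in> space M. convergent (\<lambda>t. X t \<omega>) \<and> lim (\<lambda>t. X t \<omega>) \<in> S}
      = {\<omega> \<in> space M. Cauchy (\<lambda>t. X (Suc t) \<omega>)} \<inter> ((\<lambda>\<omega>. lim (\<lambda>t. X (Suc t) \<omega>)) -` S \<inter> space M)"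
  proof -
    have "convergent (\<lambda>t. X (Suc t) \<omega>) \<longleftrightarrow> convergent (\<lambda>t. X t \<omega>)" for \<omega>
      using convergent_Suc_iff[of "\<lambda>t. X t \<omega>"] by simp
    moreover have "lim (\<lambda>t. X (Suc t) \<omega>) = lim (\<lambda>t. X t \<omega>)" for \<omega>
      using filterlim_sequentially_Suc[of "\<lambda>t. X t \<omega>"] by (simp add: lim_def)
    ultimately show ?thesis by (auto simp: Cauchy_convergent_iff)
  qed
  also have "\<dots> \<in> sets M"
    using assms(2) by (intro sets.Int sets_Collect_Cauchy measurable_sets[of _ _ borel]) auto
  finally show ?thesis .
qed

lemma
  assumes "is_test T"
  shows sets_Lset: "Lset T f g e \<in> sets Omega_inf"
    and sets_Rset: "Rset T f g e \<in> sets Omega_inf"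
    and sets_AsetF: "AsetF T f g \<in> sets Omega_inf"
    and sets_AsetG: "AsetG T f g \<in> sets Omega_inf"
proof -
  have sets: "{\<omega>. convergent (\<lambda>t. T t (path \<omega> f g)) \<and> lim (\<lambda>t. T t (path \<omega> f g)) \<in> S} \<in> sets Omega_inf"
    if "S \<in> sets borel" for S
    using sets_Collect_convergent_lim[OF measurable_test[OF assms] that] by simp
  have tendsto: "X \<longlonglongrightarrow> c \<longleftrightarrow> convergent X \<and> lim X = c" for X :: "nat \<Rightarrow> real" and c
    by (metis convergentI convergent_LIMSEQ_iff limI)
  show "Lset T f g e \<in> sets Omega_inf" using sets[of "{e<..}"] by (simp add: Lset_def)
  show "Rset T f g e \<in> sets Omega_inf" using sets[of "{..<e}"] by (simp add: Rset_def)
  show "AsetF T f g \<in> sets Omega_inf" using sets[of "{1}"] by (simp add: AsetF_def tendsto)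
  show "AsetG T f g \<in> sets Omega_inf" using sets[of "{0}"] by (simp add: AsetG_def tendsto)
qed

lemma lim_test_bounds:
  assumes "is_test T" "convergent (\<lambda>t. T t p)"
  shows "0 \<le> lim (\<lambda>t. T t p)" "lim (\<lambda>t. T t p) \<le> 1"
proof -
  have lim: "(\<lambda>t. T (Suc t) p) \<longlonglongrightarrow> lim (\<lambda>t. T t p)"
    using assms(2) by (intro LIMSEQ_Suc) (simp add: convergent_LIMSEQ_iff)
  have "0 \<le> T (Suc t) p \<and> T (Suc t) p \<le> 1" for t
    using assms(1) unfolding is_test_def by blast
  thus "0 \<le> lim (\<lambda>t. T t p)" "lim (\<lambda>t. T t p) \<le> 1"
    by (auto intro: LIMSEQ_le_const[OF lim] LIMSEQ_le_const2[OF lim])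
qed

lemma
  shows prob_space_measF: "prob_space (measF f g)"
    and prob_space_measG: "prob_space (measG f g)"
    and sets_measF [measurable_cong]: "sets (measF f g) = sets Omega_inf"
    and sets_measG [measurable_cong]: "sets (measG f g) = sets Omega_inf"
  using induced_spec by (simp_all add: measF_def measG_def)

lemma (in prob_space) AE_in_if_meets_positive_subsets:
  assumes "C \<in> events" "B \<in> events" "AE x in M. x \<in> C"
    and "\<And>A. A \<in> events \<Longrightarrow> A \<subseteq> C \<Longrightarrow> 0 < prob A \<Longrightarrow> 0 < prob (A \<inter> B)"
  shows "AE x in M. x \<in> B"
proof -
  have "prob (C - B) = 0"
  proof (rule ccontr)
    assume "prob (C - B) \<noteq> 0"
    hence "0 < prob ((C - B) \<inter> B)"
      using assms(1,2) by (intro assms(4)) (auto simp: zero_less_measure_iff)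
    moreover have "(C - B) \<inter> B = {}" by blast
    ultimately show False by simp
  qed
  hence "AE x in M. x \<notin> C - B" using assms(1,2) by (simp add: prob_eq_0)
  with assms(3) show ?thesis by eventually_elim auto
qed

lemma (in prob_space) prob_eq_0_if_disjoint_prob_eq_1:
  assumes "A \<in> events" "B \<in> events" "A \<inter> B = {}" "prob B = 1"
  shows "prob A = 0"
proof -
  have "AE x in M. x \<in> B" using assms(2,4) by (simp add: prob_eq_1)
  hence "AE x in M. x \<notin> A" by (rule AE_mp) (use assms(3) in \<open>auto intro!: AE_I2\<close>)
  thus ?thesis using assms(1) by (simp add: prob_eq_0)
qed

lemma real_eq_if_dist_lt_inverse:
  fixes x y :: real
  assumes "\<And>k::nat. \<bar>x - y\<bar> < 1 / (real k + 3)"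
  shows "x = y"
proof (rule ccontr)
  assume "x \<noteq> y"
  then obtain k :: nat where "0 < k" "inverse (real k) < \<bar>x - y\<bar>"
    using ex_inverse_of_nat_less[of "\<bar>x - y\<bar>"] by auto
  moreover have "1 / (real k + 3) \<le> inverse (real k)"
    using \<open>0 < k\<close> by (simp add: inverse_eq_divide frac_le)
  ultimately show False using assms[of k] by linarith
qed

text \<open>Countably many thresholds \<open>1 - 1/(k+3) \<in> (1/2,1)\<close>, accumulating at \<open>1\<close>, suffice.\<close>
lemma measure_AsetF_eq_1:
  assumes "reasonable T" and C: "C \<in> sets Omega_inf" "measure (measF f g) C = 1" "measure (measG f g) C = 0"
  shows "measure (measF f g) (AsetF T f g) = 1"
proof -
  interpret F: prob_space "measF f g" by (rule prob_space_measF)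
  interpret G: prob_space "measG f g" by (rule prob_space_measG)
  have test: "is_test T" using assms(1) by (simp add: reasonable_def)
  have "AE \<omega> in measF f g. \<omega> \<in> Lset T f g (1 - 1 / (real k + 3))" for k
  proof (rule F.AE_in_if_meets_positive_subsets)
    fix A assume A: "A \<in> F.events" "A \<subseteq> C" "0 < F.prob A"
    define e where "e = 1 - 1 / (real k + 3)"
    have e: "1/2 < e" "e < 1" by (simp_all add: e_def field_simps)
    have "G.prob A \<le> G.prob C" using A C by (intro G.finite_measure_mono) (auto simp: sets_measG)
    hence "G.prob A = 0" using C measure_nonneg[of "measG f g" A] by linarith
    hence "G.prob A < (1 - e) / e * F.prob A" using A e by simp
    thus "0 < F.prob (A \<inter> Lset T f g (1 - 1 / (real k + 3)))"
      using assms(1) A e unfolding e_def reasonable_def sets_measF by blast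
  qed (use C test in \<open>simp_all add: sets_measF sets_Lset F.prob_eq_1\<close>)
  hence "AE \<omega> in measF f g. \<forall>k. \<omega> \<in> Lset T f g (1 - 1 / (real k + 3))"
    by (simp add: AE_all_countable)
  hence "AE \<omega> in measF f g. \<omega> \<in> AsetF T f g"
  proof eventually_elim
    case (elim \<omega>)
    let ?X = "\<lambda>t. T t (path \<omega> f g)"
    have "convergent ?X" and above: "1 - 1 / (real k + 3) < lim ?X" for k
      using elim by (auto simp: Lset_def)
    have "lim ?X \<le> 1" using lim_test_bounds[OF test \<open>convergent ?X\<close>] by simp
    hence "\<bar>lim ?X - 1\<bar> < 1 / (real k + 3)" for k using above[of k] by linarith
    hence "lim ?X = 1" by (rule real_eq_if_dist_lt_inverse)
    thus ?case using \<open>convergent ?X\<close> by (simp add: AsetF_def convergent_LIMSEQ_iff)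
  qed
  thus ?thesis using test by (simp add: F.prob_eq_1 sets_measF sets_AsetF)
qed

lemma measure_AsetG_eq_1:
  assumes "reasonable T" and C: "C \<in> sets Omega_inf" "measure (measG f g) C = 1" "measure (measF f g) C = 0"
  shows "measure (measG f g) (AsetG T f g) = 1"
proof -
  interpret F: prob_space "measF f g" by (rule prob_space_measF)
  interpret G: prob_space "measG f g" by (rule prob_space_measG)
  have test: "is_test T" using assms(1) by (simp add: reasonable_def)
  have "AE \<omega> in measG f g. \<omega> \<in> Rset T f g (1 / (real k + 3))" for k
  proof (rule G.AE_in_if_meets_positive_subsets)
    fix A assume A: "A \<in> G.events" "A \<subseteq> C" "0 < G.prob A"
    define e where "e = 1 / (real k + 3)"
    have e: "0 < e" "e < 1/2" by (simp_all add: e_def field_simps)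
    have "F.prob A \<le> F.prob C" using A C by (intro F.finite_measure_mono) (auto simp: sets_measF)
    hence "F.prob A = 0" using C measure_nonneg[of "measF f g" A] by linarith
    hence "F.prob A < e / (1 - e) * G.prob A" using A e by simp
    thus "0 < G.prob (A \<inter> Rset T f g (1 / (real k + 3)))"
      using assms(1) A e unfolding e_def reasonable_def sets_measG by blast
  qed (use C test in \<open>simp_all add: sets_measG sets_Rset G.prob_eq_1\<close>)
  hence "AE \<omega> in measG f g. \<forall>k. \<omega> \<in> Rset T f g (1 / (real k + 3))"
    by (simp add: AE_all_countable)
  hence "AE \<omega> in measG f g. \<omega> \<in> AsetG T f g"
  proof eventually_elim
    case (elim \<omega>)
    let ?X = "\<lambda>t. T t (path \<omega> f g)"
    have "convergent ?X" and below: "lim ?X < 1 / (real k + 3)" for k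
      using elim by (auto simp: Rset_def)
    have "0 \<le> lim ?X" using lim_test_bounds[OF test \<open>convergent ?X\<close>] by simp
    hence "\<bar>lim ?X - 0\<bar> < 1 / (real k + 3)" for k using below[of k] by simp
    hence "lim ?X = 0" by (rule real_eq_if_dist_lt_inverse)
    thus ?case using \<open>convergent ?X\<close> by (simp add: AsetG_def convergent_LIMSEQ_iff)
  qed
  thus ?thesis using test by (simp add: G.prob_eq_1 sets_measG sets_AsetG)
qed

theorem mainTheorem12:
  fixes f g :: forecaster and T :: "nat \<Rightarrow> playpath \<Rightarrow> real"
  assumes "g \<noteq> f"
    and "mutually_singular f g"
    and "reasonable T"
  shows "measure (measF f g) (AsetF T f g) = 1 \<and> measure (measG f g) (AsetG T f g) = 1"
proof -
  interpret F: prob_space "measF f g" by (rule prob_space_measF)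
  interpret G: prob_space "measG f g" by (rule prob_space_measG)
  obtain Cf Cg :: "playpath set" where disj: "Cf \<inter> Cg = {}"
    and F_Cf: "F.prob {\<omega>. path \<omega> f g \<in> Cf} = 1" and G_Cg: "G.prob {\<omega>. path \<omega> f g \<in> Cg} = 1"
    using assms(2) unfolding mutually_singular_def by blast
  let ?CF = "{\<omega>. path \<omega> f g \<in> Cf}" and ?CG = "{\<omega>. path \<omega> f g \<in> Cg}"
  \<comment> \<open>measurability is not part of mutual singularity, but a nonmeasurable set has measure 0\<close>
  have CF: "?CF \<in> sets Omega_inf" and CG: "?CG \<in> sets Omega_inf"
    using F_Cf G_Cg measure_notin_sets[of ?CF "measF f g"] measure_notin_sets[of ?CG "measG f g"]
    by (auto simp: sets_measF sets_measG)
  have "G.prob ?CF = 0"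
    using CF CG disj G_Cg by (intro G.prob_eq_0_if_disjoint_prob_eq_1[of _ ?CG]) (auto simp: sets_measG)
  moreover have "F.prob ?CG = 0"
    using CF CG disj F_Cf by (intro F.prob_eq_0_if_disjoint_prob_eq_1[of _ ?CF]) (auto simp: sets_measF)
  ultimately show ?thesis
    using assms(3) CF CG F_Cf G_Cg measure_AsetF_eq_1 measure_AsetG_eq_1 by blast
qed

end
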